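(* Let $\mathcal{X}\subseteq\mathbb{R}^d$ be nonempty, closed and convex, let $f:\mathbb{R}^d\to\mathbb{R}$ be convex and differentiable, and assume $\mathcal{X}_\star:=\operatorname{arg\,min}_{x\in\mathcal{X}} f(x)$ is nonempty. Assume there is $G>0$ with $\|\nabla f(x)\|\le G$ for all $x\in\mathcal{X}$. Let $x_0\in\mathcal{X}$, $x_\star\in\mathcal{X}_\star$, and let $\{x_k\}_{k\ge0}$ be generated by $x_{k+1}\in\operatorname{arg\,min}_{z\in\mathcal{X}\cap\mathcal{B}(x_k,t_k)}\langle\nabla f(x_k),z\rangle$, where $t_k:=\frac{f(x_k)-f(x_\star)}{\|\nabla f(x_k)\|}$ whenever $x_k\neq x_\star$ and $t_k=0$ when $x_k=x_\star$. Then for every $K\ge1$, $$\frac1K\sum_{k=0}^{K-1}(f(x_k)-f(x_\star))^2\le\frac{G^2\|x_0-x_\star\|^2}{K},$$ and the average iterate $\hat x_K:=\frac1K\sum_{k=0}^{K-1}x_k$ satisfies $f(\hat x_K)-f(x_\star)\le\frac{G\|x_0-x_\star\|}{\sqrt K}$.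
   Context: $\|\cdot\|$ is the Euclidean norm, $\mathcal{B}(x,t):=\{y:\|y-x\|\le t\}$. *)

theory Defs
  imports "HOL-Analysis.Analysis"
begin

definition step_size :: "('a::real_normed_vector \<Rightarrow> real) \<Rightarrow> ('a \<Rightarrow> 'a) \<Rightarrow> 'a \<Rightarrow> 'a \<Rightarrow> real" where
  "step_size f df xs x = (if x = xs then 0 else (f x - f xs) / norm (df x))"

end

theory Submission
  imports Defs
begin

text \<open>
  Convexity gives \<open>t\<^sub>k \<parallel>\<nabla>f(x\<^sub>k)\<parallel> = f(x\<^sub>k) - f(x\<^sub>\<star>) \<le> \<langle>\<nabla>f(x\<^sub>k), x\<^sub>k - x\<^sub>\<star>\<rangle>\<close>,
  so \<open>x\<^sub>\<star>\<close> lies in the half-space where \<open>\<langle>\<nabla>f(x\<^sub>k), -\<rangle>\<close> is at most its minimum over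
  \<open>B(x\<^sub>k, t\<^sub>k)\<close>. Then the minimiser \<open>x\<^sub>k\<^sub>+\<^sub>1\<close> over \<open>X \<inter> B(x\<^sub>k, t\<^sub>k)\<close> satisfies
  \<open>\<parallel>x\<^sub>k\<^sub>+\<^sub>1 - x\<^sub>\<star>\<parallel>\<^sup>2 \<le> \<parallel>x\<^sub>k - x\<^sub>\<star>\<parallel>\<^sup>2 - t\<^sub>k\<^sup>2\<close>: either the segment from \<open>x\<^sub>k\<^sub>+\<^sub>1\<close>
  towards \<open>x\<^sub>\<star> \<in> X\<close> decreases the linear function, so by optimality it leaves the ball at
  once and \<open>x\<^sub>k\<^sub>+\<^sub>1\<close> sits on the sphere at a non-obtuse angle to \<open>x\<^sub>\<star>\<close>; or it does
  not, and then \<open>x\<^sub>k\<^sub>+\<^sub>1\<close> is the unique minimiser of the linear function over the whole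
  ball. Telescoping gives \<open>\<Sum> t\<^sub>k\<^sup>2 \<le> \<parallel>x\<^sub>0 - x\<^sub>\<star>\<parallel>\<^sup>2\<close>, and
  \<open>f(x\<^sub>k) - f(x\<^sub>\<star>) \<le> G t\<^sub>k\<close> gives the first bound; Jensen's inequality and
  Cauchy-Schwarz turn it into the second.
\<close>

lemma norm_add_power2:
  fixes x y :: "'a::real_inner"
  shows "(norm (x + y))\<^sup>2 = (norm x)\<^sup>2 + 2 * (x \<bullet> y) + (norm y)\<^sup>2"
  unfolding power2_norm_eq_inner by (simp add: inner_simps inner_commute)

lemma norm_diff_power2:
  fixes x y :: "'a::real_inner"
  shows "(norm (x - y))\<^sup>2 = (norm x)\<^sup>2 - 2 * (x \<bullet> y) + (norm y)\<^sup>2"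
  unfolding power2_norm_eq_inner by (simp add: inner_simps inner_commute)

lemma convex_on_imp_above_tangent_plane:
  fixes f :: "'a::real_normed_vector \<Rightarrow> real"
  assumes conv: "convex_on UNIV f" and der: "(f has_derivative f') (at c)"
  shows "f c + f' (w - c) \<le> f w"
proof -
  define \<phi> where "\<phi> s = f (c + s *\<^sub>R (w - c))" for s :: real
  have "convex_on UNIV \<phi>"
  proof (rule convex_onI)
    fix t s s' :: real assume "0 < t" "t < 1"
    moreover have "c + ((1 - t) *\<^sub>R s + t *\<^sub>R s') *\<^sub>R (w - c)
        = (1 - t) *\<^sub>R (c + s *\<^sub>R (w - c)) + t *\<^sub>R (c + s' *\<^sub>R (w - c))"
      by (simp add: algebra_simps)
    ultimately show "\<phi> ((1 - t) *\<^sub>R s + t *\<^sub>R s') \<le> (1 - t) * \<phi> s + t * \<phi> s'"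
      unfolding \<phi>_def using convex_onD[OF conv, of t] by auto
  qed simp
  moreover have "(\<phi> has_real_derivative f' (w - c)) (at 0)"
  proof -
    have "((\<lambda>s. c + s *\<^sub>R (w - c)) has_derivative (\<lambda>s. s *\<^sub>R (w - c))) (at 0)"
      by (auto intro!: derivative_eq_intros)
    from diff_chain_at[OF this, of f f'] der
    have "(\<phi> has_derivative (\<lambda>s. f' (s *\<^sub>R (w - c)))) (at 0)"
      by (simp add: \<phi>_def[abs_def] o_def)
    moreover have "s * f' (w - c) = f' (s *\<^sub>R (w - c))" for s
      using linear_scale[OF has_derivative_linear[OF der]] by simp
    ultimately show ?thesis
      by (rule has_derivative_imp_has_field_derivative)
  qed
  ultimately have "f' (w - c) * (1 - 0) \<le> \<phi> 1 - \<phi> 0"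
    by (intro convex_on_imp_above_tangent) auto
  then show ?thesis
    by (simp add: \<phi>_def)
qed

lemma eventually_segment_in_cball:
  fixes c y z :: "'a::real_inner"
  assumes "dist c y < r \<or> (dist c y \<le> r \<and> (y - c) \<bullet> (z - y) < 0)"
  shows "\<forall>\<^sub>F s in at_right 0. y + s *\<^sub>R (z - y) \<in> cball c r"
  using assms
proof
  assume "dist c y < r"
  moreover have "((\<lambda>s. dist c (y + s *\<^sub>R (z - y))) \<longlongrightarrow> dist c y) (at_right 0)"
    by (intro tendsto_eq_intros) auto
  ultimately have "\<forall>\<^sub>F s in at_right 0. dist c (y + s *\<^sub>R (z - y)) < r"
    by (rule order_tendstoD(2)[rotated])
  then show ?thesis
    by eventually_elim simp
next
  assume close: "dist c y \<le> r \<and> (y - c) \<bullet> (z - y) < 0"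
  define u w where "u = y - c" and "w = z - y"
  have expand: "(norm (u + s *\<^sub>R w))\<^sup>2 = (norm u)\<^sup>2 + s * (2 * (u \<bullet> w) + s * (norm w)\<^sup>2)" for s
    unfolding norm_add_power2 by (simp add: power_mult_distrib power2_eq_square algebra_simps)
  have "((\<lambda>s. 2 * (u \<bullet> w) + s * (norm w)\<^sup>2) \<longlongrightarrow> 2 * (u \<bullet> w)) (at_right 0)"
    by (intro tendsto_eq_intros) auto
  then have "\<forall>\<^sub>F s in at_right 0. 2 * (u \<bullet> w) + s * (norm w)\<^sup>2 < 0"
    using close by (intro order_tendstoD(2)) (auto simp: u_def w_def)
  with eventually_at_right_less show ?thesis
  proof eventually_elim
    case (elim s)
    then have "(norm (u + s *\<^sub>R w))\<^sup>2 < (norm u)\<^sup>2"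
      unfolding expand by (simp add: mult_pos_neg)
    then have "norm (u + s *\<^sub>R w) < norm u"
      by (rule power2_less_imp_less) simp
    with close show ?case
      by (simp add: u_def w_def dist_norm norm_minus_commute algebra_simps)
  qed
qed

lemma cball_inner_le_imp_eq:
  fixes c g y :: "'a::real_inner"
  assumes "y \<in> cball c r" "g \<noteq> 0" "g \<bullet> (y - c) \<le> - r * norm g"
  shows "y = c - (r / norm g) *\<^sub>R g"
proof -
  have r: "0 \<le> r" "norm (y - c) \<le> r"
    using assms(1) by (auto simp: dist_norm norm_minus_commute intro: order_trans[OF norm_ge_zero])
  have "(norm ((y - c) + (r / norm g) *\<^sub>R g))\<^sup>2
      = (norm (y - c))\<^sup>2 + 2 * (r / norm g) * (g \<bullet> (y - c)) + r\<^sup>2"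
    unfolding norm_add_power2 using assms(2) r(1) by (simp add: inner_commute power_mult_distrib)
  also have "2 * (r / norm g) * (g \<bullet> (y - c)) \<le> 2 * (r / norm g) * (- r * norm g)"
    using assms(3) r by (intro mult_left_mono) auto
  also have "(norm (y - c))\<^sup>2 \<le> r\<^sup>2"
    using r by (intro power_mono) auto
  finally have "(norm ((y - c) + (r / norm g) *\<^sub>R g))\<^sup>2 \<le> 0"
    using assms(2) by (simp add: power2_eq_square)
  then show ?thesis
    by (simp add: algebra_simps eq_neg_iff_add_eq_0)
qed

lemma linear_argmin_on_cball_dist_le:
  fixes X :: "'a::real_inner set"
  assumes "convex X" "xs \<in> X"
    and y: "y \<in> X \<inter> cball c r"
    and y_min: "\<forall>z \<in> X \<inter> cball c r. g \<bullet> y \<le> g \<bullet> z"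
    and g: "r > 0 \<Longrightarrow> g \<noteq> 0"
    and gap: "r * norm g \<le> g \<bullet> (c - xs)"
  shows "(norm (y - xs))\<^sup>2 \<le> (norm (c - xs))\<^sup>2 - r\<^sup>2"
proof -
  have key: "norm (y - c) = r \<and> r\<^sup>2 \<le> (y - c) \<bullet> (xs - c)"
  proof (cases "g \<bullet> (xs - y) < 0")
    case True
    have "\<not> (\<forall>\<^sub>F s in at_right 0. y + s *\<^sub>R (xs - y) \<in> cball c r)"
    proof
      assume "\<forall>\<^sub>F s in at_right 0. y + s *\<^sub>R (xs - y) \<in> cball c r"
      with eventually_at_right_real[OF zero_less_one]
      have "\<forall>\<^sub>F s in at_right 0. s \<in> {0<..<1} \<and> y + s *\<^sub>R (xs - y) \<in> cball c r"
        by eventually_elim simp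
      from eventually_happens'[OF trivial_limit_at_right_real this]
      obtain s where s: "s \<in> {0<..<1}" and in_cball: "y + s *\<^sub>R (xs - y) \<in> cball c r"
        by blast
      have "y + s *\<^sub>R (xs - y) = (1 - s) *\<^sub>R y + s *\<^sub>R xs"
        by (simp add: algebra_simps)
      then have "y + s *\<^sub>R (xs - y) \<in> X"
        using s y \<open>convex X\<close> \<open>xs \<in> X\<close> by (auto intro: convexD_alt)
      with in_cball y_min have "g \<bullet> y \<le> g \<bullet> (y + s *\<^sub>R (xs - y))"
        by blast
      with s True show False
        by (auto simp: inner_add_right dest: mult_pos_neg[of s])
    qed
    then have "\<not> (dist c y < r \<or> (dist c y \<le> r \<and> (y - c) \<bullet> (xs - y) < 0))"
      using eventually_segment_in_cball by blast
    with y have "dist c y = r" "0 \<le> (y - c) \<bullet> (xs - y)"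
      by auto
    moreover have "(y - c) \<bullet> (xs - c) = (norm (y - c))\<^sup>2 + (y - c) \<bullet> (xs - y)"
      by (simp add: power2_norm_eq_inner algebra_simps)
    ultimately show ?thesis
      by (simp add: dist_norm norm_minus_commute)
  next
    case False
    show ?thesis
    proof (cases "r = 0")
      case True
      then show ?thesis
        using y by simp
    next
      case False
      moreover have "0 \<le> r"
        using y by (auto intro: order_trans[OF zero_le_dist])
      ultimately have "r > 0"
        by simp
      have "g \<bullet> (y - c) \<le> - r * norm g"
        using \<open>\<not> g \<bullet> (xs - y) < 0\<close> gap by (simp add: inner_diff_right)
      with y g \<open>r > 0\<close> have y_eq: "y = c - (r / norm g) *\<^sub>R g"
        by (intro cball_inner_le_imp_eq) auto
      have "r\<^sup>2 = (r / norm g) * (r * norm g)"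
        using g \<open>r > 0\<close> by (simp add: power2_eq_square)
      also have "\<dots> \<le> (r / norm g) * (g \<bullet> (c - xs))"
        using gap \<open>r > 0\<close> by (intro mult_left_mono) auto
      also have "\<dots> = (y - c) \<bullet> (xs - c)"
        by (simp add: y_eq inner_diff_right diff_divide_distrib right_diff_distrib)
      finally show ?thesis
        using g \<open>r > 0\<close> by (simp add: y_eq)
    qed
  qed
  have "(norm (y - xs))\<^sup>2 = (norm ((y - c) - (xs - c)))\<^sup>2"
    by simp
  also have "\<dots> = (norm (y - c))\<^sup>2 - 2 * ((y - c) \<bullet> (xs - c)) + (norm (c - xs))\<^sup>2"
    using norm_diff_power2[of "y - c" "xs - c"] by (simp add: norm_minus_commute)
  also have "\<dots> \<le> (norm (c - xs))\<^sup>2 - r\<^sup>2"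
    using key by simp
  finally show ?thesis .
qed

lemma step_size_nonneg:
  "f xs \<le> f x \<Longrightarrow> 0 \<le> step_size f df xs x"
  by (simp add: step_size_def)

lemma step_size_pos_imp_nonzero:
  assumes "0 < step_size f df xs x"
  shows "df x \<noteq> 0"
proof
  assume "df x = 0"
  with assms show False
    by (auto simp: step_size_def split: if_splits)
qed

text \<open>If \<open>df x = 0\<close>, the quotient in \<^const>\<open>step_size\<close> is \<open>0\<close> since \<open>a / 0 = 0\<close>,
  and convexity forces \<open>f x = f xs\<close>.\<close>

lemma step_size_mult_norm:
  fixes f :: "'a::real_inner \<Rightarrow> real"
  assumes "convex_on UNIV f" "(f has_derivative (\<lambda>h. df x \<bullet> h)) (at x)" "f xs \<le> f x"
  shows "step_size f df xs x * norm (df x) = f x - f xs"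
proof -
  have "f x - f xs \<le> df x \<bullet> (x - xs)"
    using convex_on_imp_above_tangent_plane[OF assms(1,2), of xs] by (simp add: inner_diff_right)
  with assms(3) show ?thesis
    by (auto simp: step_size_def)
qed

lemma step_size_excess_le:
  fixes f :: "'a::real_inner \<Rightarrow> real"
  assumes "convex_on UNIV f" "(f has_derivative (\<lambda>h. df x \<bullet> h)) (at x)" "f xs \<le> f x"
    and "norm (df x) \<le> G"
  shows "f x - f xs \<le> G * step_size f df xs x"
proof -
  have "f x - f xs = step_size f df xs x * norm (df x)"
    using assms(1-3) by (rule step_size_mult_norm[symmetric])
  also have "\<dots> \<le> step_size f df xs x * G"
    using assms(4) step_size_nonneg[where f = f and x = x, OF assms(3)] by (rule mult_left_mono)
  finally show ?thesis
    by (simp add: mult.commute)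
qed

lemma step_size_argmin_dist_le:
  fixes f :: "'a::real_inner \<Rightarrow> real"
  assumes "convex X" "convex_on UNIV f" "(f has_derivative (\<lambda>h. df x \<bullet> h)) (at x)"
    and "xs \<in> X" "f xs \<le> f x"
    and "y \<in> X \<inter> cball x (step_size f df xs x)"
    and "\<forall>z \<in> X \<inter> cball x (step_size f df xs x). df x \<bullet> y \<le> df x \<bullet> z"
  shows "(norm (y - xs))\<^sup>2 \<le> (norm (x - xs))\<^sup>2 - (step_size f df xs x)\<^sup>2"
proof (rule linear_argmin_on_cball_dist_le)
  have "step_size f df xs x * norm (df x) = f x - f xs"
    using assms(2,3,5) by (rule step_size_mult_norm)
  also have "\<dots> \<le> df x \<bullet> (x - xs)"
    using convex_on_imp_above_tangent_plane[OF assms(2,3), of xs] by (simp add: inner_diff_right)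
  finally show "step_size f df xs x * norm (df x) \<le> df x \<bullet> (x - xs)" .
  show "0 < step_size f df xs x \<Longrightarrow> df x \<noteq> 0"
    by (rule step_size_pos_imp_nonzero)
qed (use assms in auto)

lemma convex_on_mean_excess_le:
  fixes f :: "'a::real_vector \<Rightarrow> real"
  assumes "convex_on UNIV f" "K \<ge> 1" "(\<Sum>k<K. (f (x k) - c)\<^sup>2) \<le> B\<^sup>2" "0 \<le> B"
  shows "f ((1 / real K) *\<^sub>R (\<Sum>k<K. x k)) - c \<le> B / sqrt (real K)"
proof -
  have K: "real K > 0" "{..<K} \<noteq> {}"
    using assms(2) by (auto simp: lessThan_empty_iff)
  have "(\<Sum>k<K. f (x k) - c)\<^sup>2 \<le> (\<Sum>k<K. (f (x k) - c)\<^sup>2) * real K"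
    using sum_squared_le_sum_of_squares[of "\<lambda>k. f (x k) - c" "{..<K}"] by simp
  also have "\<dots> \<le> (sqrt (real K) * B)\<^sup>2"
    using assms(3) K(1) by (simp add: power_mult_distrib mult.commute)
  finally have sum_le: "(\<Sum>k<K. f (x k) - c) \<le> sqrt (real K) * B"
    by (rule power2_le_imp_le) (use assms(4) in simp)
  have "f ((1 / real K) *\<^sub>R (\<Sum>k<K. x k)) \<le> (\<Sum>k<K. (1 / real K) * f (x k))"
    using convex_on_sum[OF finite_lessThan K(2) assms(1), of "\<lambda>_. 1 / real K" x] K(1)
    by (simp add: scaleR_sum_right)
  also have "\<dots> = c + (\<Sum>k<K. f (x k) - c) / real K"
    using K(1) by (simp add: sum_subtractf sum_divide_distrib[symmetric] field_simps)
  finally have "f ((1 / real K) *\<^sub>R (\<Sum>k<K. x k)) \<le> c + (\<Sum>k<K. f (x k) - c) / real K" .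
  then have "f ((1 / real K) *\<^sub>R (\<Sum>k<K. x k)) - c \<le> (\<Sum>k<K. f (x k) - c) / real K"
    by simp
  also have "\<dots> \<le> sqrt (real K) * B / real K"
    using sum_le K(1) by (simp add: divide_right_mono)
  also have "\<dots> = B / sqrt (real K)"
    using K(1) by (simp add: field_simps real_div_sqrt)
  finally show ?thesis .
qed

theorem theorem4:
  fixes X :: "'a::euclidean_space set"
    and f :: "'a \<Rightarrow> real" and df :: "'a \<Rightarrow> 'a"
    and G :: real and xs :: 'a and x :: "nat \<Rightarrow> 'a" and K :: nat
  assumes X: "X \<noteq> {}" "closed X" "convex X"
    and f_conv: "convex_on UNIV f"
    and f_grad: "\<And>y. (f has_derivative (\<lambda>h. df y \<bullet> h)) (at y)"
    and G: "G > 0" "\<And>y. y \<in> X \<Longrightarrow> norm (df y) \<le> G"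
    and xs: "xs \<in> X" "\<And>y. y \<in> X \<Longrightarrow> f xs \<le> f y"
    and x0: "x 0 \<in> X"
    and step: "\<And>k. x (Suc k) \<in> X \<inter> cball (x k) (step_size f df xs (x k)) \<and>
                 (\<forall>z \<in> X \<inter> cball (x k) (step_size f df xs (x k)).
                    df (x k) \<bullet> x (Suc k) \<le> df (x k) \<bullet> z)"
    and K: "K \<ge> 1"
  shows "(1 / real K) * (\<Sum>k<K. (f (x k) - f xs)\<^sup>2) \<le> G\<^sup>2 * (norm (x 0 - xs))\<^sup>2 / real K \<and>
         f ((1 / real K) *\<^sub>R (\<Sum>k<K. x k)) - f xs \<le> G * norm (x 0 - xs) / sqrt (real K)"
proof -
  \<comment> \<open>\<open>X \<noteq> {}\<close> and closedness of \<open>X\<close> only make the iteration well defined; the iterates are given.\<close>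
  define r where "r k = step_size f df xs (x k)" for k
  have x_in_X: "x k \<in> X" for k
    by (induction k) (use x0 step in auto)
  then have min: "f xs \<le> f (x k)" for k
    using xs(2) by blast
  have dist_step: "(norm (x (Suc k) - xs))\<^sup>2 \<le> (norm (x k - xs))\<^sup>2 - (r k)\<^sup>2" for k
    unfolding r_def using step[of k]
    by (intro step_size_argmin_dist_le[where df = df, OF X(3) f_conv f_grad xs(1) min]) auto
  have excess_le: "f (x k) - f xs \<le> G * r k" for k
    unfolding r_def using G(2)[OF x_in_X]
    by (intro step_size_excess_le[where df = df, OF f_conv f_grad min])
  have "(\<Sum>k<K. (f (x k) - f xs)\<^sup>2) \<le> (\<Sum>k<K. G\<^sup>2 * (r k)\<^sup>2)"
    using excess_le min by (intro sum_mono) (simp add: power_mono flip: power_mult_distrib)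
  also have "\<dots> \<le> G\<^sup>2 * (\<Sum>k<K. (norm (x k - xs))\<^sup>2 - (norm (x (Suc k) - xs))\<^sup>2)"
    unfolding sum_distrib_left[symmetric] using dist_step
    by (intro mult_left_mono sum_mono) (auto simp: algebra_simps)
  also have "\<dots> \<le> (G * norm (x 0 - xs))\<^sup>2"
    using sum_lessThan_telescope'[of "\<lambda>k. (norm (x k - xs))\<^sup>2" K]
    by (simp add: mult_left_mono power_mult_distrib)
  finally have sum_sq: "(\<Sum>k<K. (f (x k) - f xs)\<^sup>2) \<le> (G * norm (x 0 - xs))\<^sup>2" .
  then show ?thesis
    using convex_on_mean_excess_le[OF f_conv K sum_sq] G(1) K
    by (simp add: divide_right_mono power_mult_distrib)
qed

end
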